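(* Suppose $q^{2k}\neq1$. Let $a,b,c$ be pairwise distinct elements of $\{1,\dots,n\}$, and let $\phi_a$ (resp. $\phi_c$) denote either $\psi_a$ or $\psi_a^*$ (resp. $\psi_c$ or $\psi_c^*$). Then in $\mathrm{Cl}_q(n,k)$: \[ [\psi_a\psi_b^*,\psi_b\psi_a^*] = \frac{(\omega_a\omega_b^{-1})^k-(\omega_a\omega_b^{-1})^{-k}}{q^k-q^{-k}},\qquad [\psi_a\psi_b,\psi_b^*\psi_a^*] = \frac{(q\omega_a\omega_b)^k-(q\omega_a\omega_b)^{-k}}{q^k-q^{-k}}, \] \[ [\phi_a\psi_b,\psi_b^*\phi_c]_{q^{\pm k}} = \omega_b^{\mp k}\phi_a\phi_c,\qquad \psi_a\psi_a^*\pm\psi_a^*\psi_a = \frac{q^k\omega_a^k\pm\omega_a^{-k}}{q^k\pm1}, \] where $[A,B]=AB-BA$ and $[A,B]_x=AB-xBA$ (in each identity the signs are taken consistently).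
   Context: Let $\mathbb{k}$ be a field of characteristic different from $2$, let $q\in\mathbb{k}^\times$, and let $n,k$ be positive integers. The quantum Clifford algebra $\mathrm{Cl}_q(n,k)$ is the unital associative $\mathbb{k}$-algebra generated by $\psi_a,\psi_a^*,\omega_a,\omega_a^{-1}$ for $a\in\{1,\dots,n\}$, subject to the relations (for all $a,b\in\{1,\dots,n\}$): $\omega_a\omega_b=\omega_b\omega_a$; $\omega_a\omega_a^{-1}=1$; $\omega_a\psi_b=q^{\delta_{ab}}\psi_b\omega_a$; $\omega_a\psi_b^*=q^{-\delta_{ab}}\psi_b^*\omega_a$; $\psi_a\psi_b+\psi_b\psi_a=0$; $\psi_a^*\psi_b^*+\psi_b^*\psi_a^*=0$; $\psi_a\psi_a^*+q^k\psi_a^*\psi_a=\omega_a^{-k}$; $\psi_a\psi_a^*+q^{-k}\psi_a^*\psi_a=\omega_a^{k}$; and $\psi_a\psi_b^*+\psi_b^*\psi_a=0$ if $a\neq b$. *)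

theory Defs
  imports Main
begin

definition kalg :: "('k::field \<Rightarrow> 'a::ring_1) \<Rightarrow> bool" where
  "kalg sc \<longleftrightarrow> sc 0 = 0 \<and> sc 1 = 1 \<and>
     (\<forall>x y. sc (x + y) = sc x + sc y) \<and> (\<forall>x y. sc (x * y) = sc x * sc y) \<and>
     (\<forall>x z. sc x * z = z * sc x)"

text \<open>Elements psi a, psis a (= psi_a^*), om a (= omega_a), omi a (= omega_a^{-1}),
 a \<in> {1..n}, of a k-algebra satisfy the defining relations of Cl_q(n,k).\<close>
definition cl_rels ::
  "('k::field \<Rightarrow> 'a::ring_1) \<Rightarrow> 'k \<Rightarrow> nat \<Rightarrow> nat \<Rightarrow>
   (nat \<Rightarrow> 'a) \<Rightarrow> (nat \<Rightarrow> 'a) \<Rightarrow> (nat \<Rightarrow> 'a) \<Rightarrow> (nat \<Rightarrow> 'a) \<Rightarrow> bool" where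
  "cl_rels sc q n k psi psis om omi \<longleftrightarrow>
    (\<forall>a\<in>{1..n}. \<forall>b\<in>{1..n}.
       om a * om b = om b * om a \<and>
       om a * omi a = 1 \<and>
       om a * psi b = sc (if a = b then q else 1) * psi b * om a \<and>
       om a * psis b = sc (if a = b then inverse q else 1) * psis b * om a \<and>
       psi a * psi b + psi b * psi a = 0 \<and>
       psis a * psis b + psis b * psis a = 0 \<and>
       psi a * psis a + sc (q ^ k) * psis a * psi a = omi a ^ k \<and>
       psi a * psis a + sc (inverse q ^ k) * psis a * psi a = om a ^ k \<and>
       (a \<noteq> b \<longrightarrow> psi a * psis b + psis b * psi a = 0))"

definition comm :: "'a::ring \<Rightarrow> 'a \<Rightarrow> 'a" where
  "comm x y = x * y - y * x"

definition qcomm :: "('k \<Rightarrow> 'a::ring) \<Rightarrow> 'k \<Rightarrow> 'a \<Rightarrow> 'a \<Rightarrow> 'a" where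
  "qcomm sc t x y = x * y - sc t * y * x"

end

theory Submission
  imports Defs
begin

(* Write X_i = psi_i psi_i^* and Y_i = psi_i^* psi_i. The two quadratic relations at index i read
   omega_i^(-k) = X_i + q^k Y_i and omega_i^k = X_i + q^(-k) Y_i. Generators with distinct indices
   anticommute, so quadratic monomials in them commute; moving such monomials past each other
   rewrites every left-hand side in terms of X_a, Y_a, X_b, Y_b, and after substituting the two
   relations on the right-hand sides only a computation with the scalars q^k and q^(-k) remains,
   which needs q^(2k) <> 1 just to divide at the end. *)

lemma mult_commute_of_anticommute:
  fixes x s t :: "'a::ring_1"
  assumes "x * s = - (s * x)" and "x * t = - (t * x)"
  shows "x * (s * t) = s * t * x"
proof -
  have "x * (s * t) = - (s * (x * t))" by (simp add: assms(1) flip: mult.assoc)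
  also have "\<dots> = s * t * x" by (simp add: assms(2) mult.assoc)
  finally show ?thesis .
qed

lemma mult_mult_commute_of_anticommute:
  fixes x y s t :: "'a::ring_1"
  assumes "x * s = - (s * x)" "x * t = - (t * x)" "y * s = - (s * y)" "y * t = - (t * y)"
  shows "x * y * (s * t) = s * t * (x * y)"
proof -
  have "x * y * (s * t) = x * (s * t) * y"
    by (simp only: mult.assoc mult_commute_of_anticommute[OF assms(3,4)])
  also have "\<dots> = s * t * (x * y)"
    by (simp only: mult_commute_of_anticommute[OF assms(1,2)] mult.assoc)
  finally show ?thesis .
qed

lemma power_mult_distrib_of_commute:
  fixes x y :: "'a::monoid_mult"
  assumes "x * y = y * x"
  shows "(x * y) ^ n = x ^ n * y ^ n"
proof (induction n)
  case (Suc n)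
  have "(x * y) ^ Suc n = x ^ n * (y ^ n * x) * y" by (simp only: power_Suc2 Suc.IH mult.assoc)
  also have "\<dots> = x ^ Suc n * y ^ Suc n"
    by (simp only: power_commuting_commutes[OF assms[symmetric]] power_Suc2 mult.assoc)
  finally show ?case .
qed simp

lemma commute_inverse:
  fixes x y y' :: "'a::monoid_mult"
  assumes "x * y = y * x" and "y * y' = 1" and "y' * y = 1"
  shows "x * y' = y' * x"
proof -
  have "x * y' = y' * (y * x) * y'" by (simp add: assms(3) flip: mult.assoc)
  also have "\<dots> = y' * x" by (simp add: mult.assoc assms(2) flip: assms(1))
  finally show ?thesis .
qed

lemma left_inverse_of_commute_power:
  fixes x y :: "'a::monoid_mult"
  assumes "x * y = 1" and "0 < k" and "x * y ^ k = y ^ k * x"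
  shows "y * x = 1"
proof -
  define l where "l = x ^ (k - 1) * y ^ k"
  have "l * x = x ^ (k - 1) * x * y ^ k" by (simp add: l_def assms(3) mult.assoc)
  also have "\<dots> = 1"
    by (simp only: power_minus_mult[OF assms(2)] left_right_inverse_power[OF assms(1)])
  finally have "l * x = 1" .
  then have "l = y" by (metis assms(1) mult.assoc mult_1_left mult_1_right)
  with \<open>l * x = 1\<close> show ?thesis by simp
qed

lemma mult_swap_of_anticommute:
  fixes x y s t :: "'a::ring_1"
  assumes "x * s = - (s * x)" and "x * t = - (t * x)"
  shows "x * s * (t * y) = s * t * (x * y)"
proof -
  have "x * s * (t * y) = x * (s * t) * y" by (simp only: mult.assoc)
  also have "\<dots> = s * t * (x * y)" by (simp only: mult_commute_of_anticommute[OF assms] mult.assoc)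
  finally show ?thesis .
qed

lemma qcomm_of_anticommute:
  fixes x y s t z :: "'a::ring_1"
  assumes "x * s = - (s * x)" "x * t = - (t * x)" "y * s = - (s * y)" "y * t = - (t * y)"
    and "y * x = - (x * y)"
  shows "x * s * (t * y) - z * (t * y) * (x * s) = (s * t + z * (t * s)) * x * y"
proof -
  have xy: "x * s * (t * y) = s * t * x * y"
    using mult_swap_of_anticommute[OF assms(1,2)] by (simp only: mult.assoc)
  have "s * x = - (x * s)" "s * y = - (y * s)" by (simp_all add: assms(1,3))
  then have sxy: "s * (x * y) = x * y * s" by (rule mult_commute_of_anticommute)
  have "t * y * (x * s) = t * (y * x) * s" by (simp only: mult.assoc)
  also have "\<dots> = - (t * (x * y * s))" by (simp add: assms(5) mult.assoc)
  also have "\<dots> = - (t * s * x * y)" by (simp only: sxy[symmetric]) (simp only: mult.assoc)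
  finally show ?thesis using xy by (simp add: algebra_simps)
qed

locale k_algebra =
  fixes sc :: "'k::field \<Rightarrow> 'a::ring_1"
  assumes kalg: "kalg sc"
begin

lemma
  shows sc_0 [simp]: "sc 0 = 0"
    and sc_1 [simp]: "sc 1 = 1"
    and sc_add: "sc (x + y) = sc x + sc y"
    and sc_mult: "sc (x * y) = sc x * sc y"
    and sc_commute: "sc x * z = z * sc x"
  using kalg unfolding kalg_def by blast+

lemma sc_minus: "sc (- x) = - sc x"
  using sc_add[of "- x" x] by (simp add: eq_neg_iff_add_eq_0)

lemma sc_diff: "sc (x - y) = sc x - sc y"
  using sc_add[of x "- y"] by (simp add: sc_minus)

lemma sc_power: "sc (x ^ n) = sc x ^ n"
  by (induction n) (simp_all add: sc_mult)

lemma mult_sc_left_commute: "z * (sc x * w) = sc x * (z * w)"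
  by (simp only: sc_commute mult.assoc)

lemma sc_mult_sc: "sc x * (sc y * z) = sc (x * y) * z"
  by (simp add: sc_mult mult.assoc)

lemma power_sc_mult: "(sc x * z) ^ n = sc (x ^ n) * z ^ n"
  by (simp add: power_mult_distrib_of_commute[OF sc_commute] sc_power)

lemma mult_commute_of_sc_commute:
  assumes "c \<noteq> 0" and "w * x = sc c * x * w" and "w * y = sc (inverse c) * y * w"
  shows "w * (x * y) = x * y * w"
proof -
  have "w * (x * y) = sc c * (x * (sc (inverse c) * (y * w)))"
    by (simp only: assms(2,3) mult.assoc flip: mult.assoc[of w x])
  also have "\<dots> = x * y * w"
    by (simp add: mult_sc_left_commute[of x] sc_mult_sc assms(1) mult.assoc)
  finally show ?thesis .
qed

lemma sc_mult_eqD: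
  assumes "sc x * y = z" and "x \<noteq> 0"
  shows "y = sc (inverse x) * z"
proof -
  have "sc (inverse x) * z = sc (inverse x) * (sc x * y)" by (simp add: assms(1))
  also have "\<dots> = y" by (simp add: sc_mult_sc assms(2))
  finally show ?thesis by simp
qed

end

lemma
  fixes x :: "'k::field"
  assumes "x \<noteq> 0" and "x ^ 2 \<noteq> 1"
  shows ne_inverse_of_square_ne_one: "x \<noteq> inverse x"
    and add_one_ne_zero_of_square_ne_one: "x + 1 \<noteq> 0"
    and diff_one_ne_zero_of_square_ne_one: "x - 1 \<noteq> 0"
proof -
  show "x \<noteq> inverse x"
    using assms by (metis power2_eq_square right_inverse)
  show "x + 1 \<noteq> 0" "x - 1 \<noteq> 0"
    using assms(2) by (auto simp: power2_eq_square eq_neg_iff_add_eq_0[symmetric])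
qed

locale quantum_clifford = k_algebra sc
  for sc :: "'k::field \<Rightarrow> 'a::ring_1" +
  fixes q :: 'k and n k :: nat and psi psis om omi :: "nat \<Rightarrow> 'a"
  assumes rels: "cl_rels sc q n k psi psis om omi"
    and q_nonzero: "q \<noteq> 0" and k_pos: "0 < k"
begin

lemma
  assumes "i \<in> {1..n}" and "j \<in> {1..n}"
  shows om_commute: "om i * om j = om j * om i"
    and om_psi: "om i * psi j = sc (if i = j then q else 1) * psi j * om i"
    and om_psis: "om i * psis j = sc (if i = j then inverse q else 1) * psis j * om i"
    and psi_anticommute: "psi i * psi j + psi j * psi i = 0"
    and psis_anticommute: "psis i * psis j + psis j * psis i = 0"
    and psi_psis_anticommute: "i \<noteq> j \<Longrightarrow> psi i * psis j + psis j * psi i = 0"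
  using rels assms unfolding cl_rels_def by blast+

lemma
  assumes "i \<in> {1..n}"
  shows om_omi: "om i * omi i = 1"
    and omi_power_eq: "omi i ^ k = psi i * psis i + sc (q ^ k) * (psis i * psi i)"
    and om_power_eq: "om i ^ k = psi i * psis i + sc (inverse q ^ k) * (psis i * psi i)"
  using rels assms unfolding cl_rels_def by (auto simp: mult.assoc)

lemma anticommute:
  assumes "i \<in> {1..n}" "j \<in> {1..n}" "i \<noteq> j" "x \<in> {psi i, psis i}" "y \<in> {psi j, psis j}"
  shows "x * y = - (y * x)"
proof -
  have "x * y + y * x = 0"
    using assms psi_anticommute psis_anticommute psi_psis_anticommute
      psi_psis_anticommute[of j i] by (auto simp: add.commute)
  then show ?thesis by (simp add: eq_neg_iff_add_eq_0)
qed

lemma om_commute_omi_power: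
  assumes "i \<in> {1..n}"
  shows "om i * omi i ^ k = omi i ^ k * om i"
proof -
  have om_q: "om i * psi i = sc q * psi i * om i" "om i * psis i = sc (inverse q) * psis i * om i"
    using om_psi[OF assms assms] om_psis[OF assms assms] by simp_all
  have "om i * (psi i * psis i) = psi i * psis i * om i"
    using q_nonzero om_q by (rule mult_commute_of_sc_commute)
  moreover have "om i * (psis i * psi i) = psis i * psi i * om i"
    by (rule mult_commute_of_sc_commute[of "inverse q"]) (simp_all add: q_nonzero om_q)
  ultimately show ?thesis
    by (simp add: omi_power_eq[OF assms] distrib_left distrib_right mult_sc_left_commute mult.assoc)
qed

(* The relations only make omi i a right inverse of om i. *)
lemma omi_om:
  assumes "i \<in> {1..n}"
  shows "omi i * om i = 1"
  using om_omi[OF assms] k_pos om_commute_omi_power[OF assms]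
  by (rule left_inverse_of_commute_power)

lemma om_omi_commute:
  assumes "i \<in> {1..n}" and "j \<in> {1..n}"
  shows "om i * omi j = omi j * om i"
  using om_commute[OF assms] om_omi[OF assms(2)] omi_om[OF assms(2)] by (rule commute_inverse)

lemma omi_omi_commute:
  assumes "i \<in> {1..n}" and "j \<in> {1..n}"
  shows "omi i * omi j = omi j * omi i"
  using om_omi_commute[OF assms(2,1), symmetric] om_omi[OF assms(2)] omi_om[OF assms(2)]
  by (rule commute_inverse)

lemma sc_q_power_cancel:
  shows "sc (q ^ k) * (sc (inverse q ^ k) * z) = z"
    and "sc (inverse q ^ k) * (sc (q ^ k) * z) = z"
  by (simp_all add: sc_mult_sc q_nonzero flip: power_mult_distrib)

lemma mult_mult_commute:
  assumes "i \<in> {1..n}" "j \<in> {1..n}" "i \<noteq> j"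
    and "x \<in> {psi i, psis i}" "x' \<in> {psi i, psis i}" "y \<in> {psi j, psis j}" "y' \<in> {psi j, psis j}"
  shows "x * x' * (y * y') = y * y' * (x * x')"
  using assms by (intro mult_mult_commute_of_anticommute anticommute) auto

lemma mult_swap_distinct:
  assumes "i \<in> {1..n}" "j \<in> {1..n}" "i \<noteq> j"
    and "x \<in> {psi i, psis i}" "s \<in> {psi j, psis j}" "t \<in> {psi j, psis j}"
  shows "x * s * (t * y) = s * t * (x * y)"
  using assms by (intro mult_swap_of_anticommute anticommute) auto

lemma comm_psi_psis_psi_psis:
  assumes a: "a \<in> {1..n}" and b: "b \<in> {1..n}" and ab: "a \<noteq> b"
    and D: "q ^ k \<noteq> inverse q ^ k"
  shows "comm (psi a * psis b) (psi b * psis a) =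
    sc (inverse (q ^ k - inverse q ^ k)) * ((om a * omi b) ^ k - (omi a * om b) ^ k)"
proof -
  define Xa Ya Xb Yb where "Xa = psi a * psis a" and "Ya = psis a * psi a"
    and "Xb = psi b * psis b" and "Yb = psis b * psi b"
  have comm_eq: "comm (psi a * psis b) (psi b * psis a) = Yb * Xa - Ya * Xb"
    unfolding comm_def Xa_def Ya_def Xb_def Yb_def
    using mult_swap_distinct[OF a b ab, of "psi a" "psis b" "psi b" "psis a"]
      mult_swap_distinct[OF b a ab[symmetric], of "psi b" "psis a" "psi a" "psis b"] by simp
  have "Yb * Xa = Xa * Yb"
    unfolding Xa_def Yb_def by (rule mult_mult_commute[OF a b ab, symmetric]) simp_all
  then have "sc (q ^ k - inverse q ^ k) * (Yb * Xa - Ya * Xb) =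
    (Xa + sc (inverse q ^ k) * Ya) * (Xb + sc (q ^ k) * Yb)
      - (Xa + sc (q ^ k) * Ya) * (Xb + sc (inverse q ^ k) * Yb)"
    by (simp add: sc_diff algebra_simps mult_sc_left_commute[of Xa] mult_sc_left_commute[of Ya]
        sc_q_power_cancel)
  also have "\<dots> = om a ^ k * omi b ^ k - omi a ^ k * om b ^ k"
    by (simp only: Xa_def Ya_def Xb_def Yb_def om_power_eq[OF a] om_power_eq[OF b]
        omi_power_eq[OF a] omi_power_eq[OF b])
  also have "\<dots> = (om a * omi b) ^ k - (omi a * om b) ^ k"
    using power_mult_distrib_of_commute[OF om_omi_commute[OF a b]]
      power_mult_distrib_of_commute[OF om_omi_commute[OF b a, symmetric]] by simp
  finally show ?thesis
    unfolding comm_eq by (rule sc_mult_eqD) (use D in simp)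
qed

lemma comm_psi_psi_psis_psis:
  assumes a: "a \<in> {1..n}" and b: "b \<in> {1..n}" and ab: "a \<noteq> b"
    and D: "q ^ k \<noteq> inverse q ^ k"
  shows "comm (psi a * psi b) (psis b * psis a) =
    sc (inverse (q ^ k - inverse q ^ k)) *
      ((sc q * om a * om b) ^ k - (sc (inverse q) * omi a * omi b) ^ k)"
proof -
  define Xa Ya Xb Yb where "Xa = psi a * psis a" and "Ya = psis a * psi a"
    and "Xb = psi b * psis b" and "Yb = psis b * psi b"
  have comm_eq: "comm (psi a * psi b) (psis b * psis a) = Xb * Xa - Ya * Yb"
    unfolding comm_def Xa_def Ya_def Xb_def Yb_def
    using mult_swap_distinct[OF a b ab, of "psi a" "psi b" "psis b" "psis a"]
      mult_swap_distinct[OF b a ab[symmetric], of "psis b" "psis a" "psi a" "psi b"] by simp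
  have "Xb * Xa = Xa * Xb"
    unfolding Xa_def Xb_def by (rule mult_mult_commute[OF a b ab, symmetric]) simp_all
  then have "sc (q ^ k - inverse q ^ k) * (Xb * Xa - Ya * Yb) =
    sc (q ^ k) * ((Xa + sc (inverse q ^ k) * Ya) * (Xb + sc (inverse q ^ k) * Yb))
      - sc (inverse q ^ k) * ((Xa + sc (q ^ k) * Ya) * (Xb + sc (q ^ k) * Yb))"
    by (simp add: sc_diff algebra_simps mult_sc_left_commute[of Xa] mult_sc_left_commute[of Ya]
        sc_q_power_cancel)
  also have "\<dots> = sc (q ^ k) * (om a ^ k * om b ^ k) - sc (inverse q ^ k) * (omi a ^ k * omi b ^ k)"
    by (simp only: Xa_def Ya_def Xb_def Yb_def om_power_eq[OF a] om_power_eq[OF b]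
        omi_power_eq[OF a] omi_power_eq[OF b])
  also have "\<dots> = (sc q * om a * om b) ^ k - (sc (inverse q) * omi a * omi b) ^ k"
    by (simp only: mult.assoc power_sc_mult
        power_mult_distrib_of_commute[OF om_commute[OF a b]]
        power_mult_distrib_of_commute[OF omi_omi_commute[OF a b]])
  finally show ?thesis
    unfolding comm_eq by (rule sc_mult_eqD) (use D in simp)
qed

lemma qcomm_psi_psis:
  assumes a: "a \<in> {1..n}" and b: "b \<in> {1..n}" and c: "c \<in> {1..n}"
    and "a \<noteq> b" "b \<noteq> c" "a \<noteq> c"
    and x: "x \<in> {psi a, psis a}" and y: "y \<in> {psi c, psis c}"
  shows "qcomm sc (q ^ k) (x * psi b) (psis b * y) = omi b ^ k * x * y"
    and "qcomm sc (inverse q ^ k) (x * psi b) (psis b * y) = om b ^ k * x * y"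
proof -
  have "x * psi b = - (psi b * x)" "x * psis b = - (psis b * x)"
    "y * psi b = - (psi b * y)" "y * psis b = - (psis b * y)" "y * x = - (x * y)"
    using anticommute[OF a b \<open>a \<noteq> b\<close> x] anticommute[OF c b \<open>b \<noteq> c\<close>[symmetric] y]
      anticommute[OF c a \<open>a \<noteq> c\<close>[symmetric] y x] by simp_all
  then have "x * psi b * (psis b * y) - z * (psis b * y) * (x * psi b) =
      (psi b * psis b + z * (psis b * psi b)) * x * y" for z
    by (rule qcomm_of_anticommute)
  then show "qcomm sc (q ^ k) (x * psi b) (psis b * y) = omi b ^ k * x * y"
    and "qcomm sc (inverse q ^ k) (x * psi b) (psis b * y) = om b ^ k * x * y"
    unfolding qcomm_def by (simp_all add: omi_power_eq[OF b] om_power_eq[OF b])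
qed

lemma psi_psis_add_psis_psi:
  assumes i: "i \<in> {1..n}" and "q ^ k + 1 \<noteq> 0"
  shows "psi i * psis i + psis i * psi i =
    sc (inverse (q ^ k + 1)) * (sc (q ^ k) * om i ^ k + omi i ^ k)"
proof (rule sc_mult_eqD)
  show "sc (q ^ k + 1) * (psi i * psis i + psis i * psi i) = sc (q ^ k) * om i ^ k + omi i ^ k"
    by (simp add: om_power_eq[OF i] omi_power_eq[OF i] sc_add algebra_simps sc_q_power_cancel)
qed fact

lemma psi_psis_diff_psis_psi:
  assumes i: "i \<in> {1..n}" and "q ^ k - 1 \<noteq> 0"
  shows "psi i * psis i - psis i * psi i =
    sc (inverse (q ^ k - 1)) * (sc (q ^ k) * om i ^ k - omi i ^ k)"
proof (rule sc_mult_eqD)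
  show "sc (q ^ k - 1) * (psi i * psis i - psis i * psi i) = sc (q ^ k) * om i ^ k - omi i ^ k"
    by (simp add: om_power_eq[OF i] omi_power_eq[OF i] sc_diff algebra_simps sc_q_power_cancel)
qed fact

end

theorem lemma3p16:
  fixes sc :: "'k::field \<Rightarrow> 'a::ring_1"
    and q :: 'k and n k :: nat
    and psi psis om omi :: "nat \<Rightarrow> 'a"
    and a b c :: nat
  assumes char: "(2::'k) \<noteq> 0"
    and q0: "q \<noteq> 0" and n: "0 < n" and k: "0 < k"
    and alg: "kalg sc"
    and rels: "cl_rels sc q n k psi psis om omi"
    and q2k: "q ^ (2 * k) \<noteq> 1"
    and abc: "a \<in> {1..n}" "b \<in> {1..n}" "c \<in> {1..n}"
    and dist: "a \<noteq> b" "b \<noteq> c" "a \<noteq> c"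
  shows
    "comm (psi a * psis b) (psi b * psis a) =
       sc (inverse (q ^ k - inverse q ^ k)) *
         ((om a * omi b) ^ k - (omi a * om b) ^ k)
     \<and> comm (psi a * psi b) (psis b * psis a) =
       sc (inverse (q ^ k - inverse q ^ k)) *
         ((sc q * om a * om b) ^ k - (sc (inverse q) * omi a * omi b) ^ k)
     \<and> (\<forall>pa\<in>{psi a, psis a}. \<forall>pc\<in>{psi c, psis c}.
       qcomm sc (q ^ k) (pa * psi b) (psis b * pc) = omi b ^ k * pa * pc \<and>
       qcomm sc (inverse q ^ k) (pa * psi b) (psis b * pc) = om b ^ k * pa * pc)
     \<and> psi a * psis a + psis a * psi a =
       sc (inverse (q ^ k + 1)) * (sc (q ^ k) * om a ^ k + omi a ^ k)
     \<and> psi a * psis a - psis a * psi a =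
       sc (inverse (q ^ k - 1)) * (sc (q ^ k) * om a ^ k - omi a ^ k)"
proof -
  interpret quantum_clifford sc q n k psi psis om omi
    by unfold_locales (fact alg rels q0 k)+
  have Q: "q ^ k \<noteq> 0" "(q ^ k) ^ 2 \<noteq> 1"
    using q0 q2k by (simp_all add: power_mult[symmetric] mult.commute)
  have D: "q ^ k \<noteq> inverse q ^ k"
    using ne_inverse_of_square_ne_one[OF Q] by (simp add: power_inverse)
  show ?thesis
    using comm_psi_psis_psi_psis[OF abc(1,2) dist(1) D] comm_psi_psi_psis_psis[OF abc(1,2) dist(1) D]
      qcomm_psi_psis[OF abc dist]
      psi_psis_add_psis_psi[OF abc(1) add_one_ne_zero_of_square_ne_one[OF Q]]
      psi_psis_diff_psis_psi[OF abc(1) diff_one_ne_zero_of_square_ne_one[OF Q]]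
    by blast
qed

end
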